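(* Let $G$ be a graph with $N$ edges having a 3-valent vertex whose incident edges are numbered $1,2,3$. Then the open subscheme $$\mathcal{V}(\Psi^{13,23}_G)\setminus\big(\mathcal{V}(\Psi^{13,23}_G)\cap\mathcal{V}(\Psi^{1,2}_{G,3})\big)\subset\mathbb{P}^{N-4}=\mathbb{P}(\alpha_4:\dots:\alpha_N)$$ is smooth.
   Context: Dodgson polynomials: for a graph $G$ without self-loops, with edges $1,\dots,N$ and variables $\alpha_e$, orient the edges; for edge $e$ and vertex $v$ let $\varepsilon_{e,v}=1$ if $v$ is the source of $e$, $-1$ if the target, $0$ otherwise; let $\mathcal{E}_G$ be obtained from $(\varepsilon_{e,v})$ by deleting one column, $A=\mathrm{diag}(\alpha_1,\dots,\alpha_N)$, $M_G=\begin{pmatrix}A&\mathcal{E}_G\\-\mathcal{E}_G^T&0\end{pmatrix}$ (so $\Psi_G=\det M_G$ is the graph polynomial). For edge sets $I,J,K$ with $|I|=|J|$, $\Psi^{I,J}_{G,K}$ is the determinant of $M_G$ with rows $I$ and columns $J$ removed and $\alpha_e=0$ for $e\in K$ (defined up to sign). Sets are written by concatenating labels: $\Psi^{13,23}_G$ has $I=\{1,3\}$, $J=\{2,3\}$; $\Psi^{1,2}_{G,3}$ has $I=\{1\},J=\{2\},K=\{3\}$. $\mathcal{V}(\cdot)$ denotes the zero locus. *)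

theory Defs
  imports "HOL-Library.Poly_Mapping" "Jordan_Normal_Form.Determinant" "Jordan_Normal_Form.DL_Submatrix"
begin

text \<open>Multivariate polynomials in the variables alpha_0, alpha_1, ... with coefficients in 'k,
  represented as finitely supported maps from monomials (exponent vectors) to coefficients.\<close>
type_synonym 'k mpoly = "(nat \<Rightarrow>\<^sub>0 nat) \<Rightarrow>\<^sub>0 'k"

definition mp_var :: "nat \<Rightarrow> 'k::comm_ring_1 mpoly" where
  "mp_var i = Poly_Mapping.single (Poly_Mapping.single i 1) 1"

definition mp_const :: "'k::comm_ring_1 \<Rightarrow> 'k mpoly" where
  "mp_const c = Poly_Mapping.single 0 c"

definition mp_eval :: "(nat \<Rightarrow> 'k::comm_ring_1) \<Rightarrow> 'k mpoly \<Rightarrow> 'k" where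
  "mp_eval a p = (\<Sum>m\<in>Poly_Mapping.keys p.
      Poly_Mapping.lookup p m * (\<Prod>i\<in>Poly_Mapping.keys m. a i ^ Poly_Mapping.lookup m i))"

definition mp_pderiv :: "nat \<Rightarrow> 'k::comm_ring_1 mpoly \<Rightarrow> 'k mpoly" where
  "mp_pderiv i p = (\<Sum>m\<in>Poly_Mapping.keys p.
      Poly_Mapping.single (m - Poly_Mapping.single i 1)
        (of_nat (Poly_Mapping.lookup m i) * Poly_Mapping.lookup p m))"

text \<open>Graphs: edges are labelled 1..N, vertices are 0..<n; edge e is oriented from
  src e to tgt e.  A loopless graph has src e \<noteq> tgt e.\<close>
definition loopless_graph :: "nat \<Rightarrow> nat \<Rightarrow> (nat \<Rightarrow> nat) \<Rightarrow> (nat \<Rightarrow> nat) \<Rightarrow> bool" where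
  "loopless_graph n N src tgt \<longleftrightarrow>
     (\<forall>e\<in>{1..N}. src e < n \<and> tgt e < n \<and> src e \<noteq> tgt e)"

definition eps :: "(nat \<Rightarrow> nat) \<Rightarrow> (nat \<Rightarrow> nat) \<Rightarrow> nat \<Rightarrow> nat \<Rightarrow> int" where
  "eps src tgt e v = (if v = src e then 1 else if v = tgt e then -1 else 0)"

text \<open>The vertex columns: vertex d is deleted; vertex column k corresponds to vertex
  (if k < d then k else k+1).\<close>
definition vcol :: "nat \<Rightarrow> nat \<Rightarrow> nat" where
  "vcol d k = (if k < d then k else Suc k)"

text \<open>The matrix M_G (size N + n - 1) with alpha_e := 0 for e \<in> K.  Row/column index i < N
  corresponds to edge i+1, index N + k to vertex vcol d k.\<close>
definition graph_matrix ::
  "nat \<Rightarrow> nat \<Rightarrow> (nat \<Rightarrow> nat) \<Rightarrow> (nat \<Rightarrow> nat) \<Rightarrow> nat \<Rightarrow> nat set \<Rightarrow> 'k::comm_ring_1 mpoly mat" where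
  "graph_matrix n N src tgt d K = mat (N + n - 1) (N + n - 1) (\<lambda>(i,j).
     if i < N \<and> j < N then (if i = j \<and> Suc i \<notin> K then mp_var (Suc i) else 0)
     else if i < N then mp_const (of_int (eps src tgt (Suc i) (vcol d (j - N))))
     else if j < N then mp_const (of_int (- eps src tgt (Suc j) (vcol d (i - N))))
     else 0)"

text \<open>Dodgson polynomial Psi^{I,J}_{G,K}: determinant of M_G with the rows of the edges in I
  and the columns of the edges in J removed and alpha_e = 0 for e \<in> K (defined up to sign).\<close>
definition dodgson ::
  "nat \<Rightarrow> nat \<Rightarrow> (nat \<Rightarrow> nat) \<Rightarrow> (nat \<Rightarrow> nat) \<Rightarrow> nat \<Rightarrow> nat set \<Rightarrow> nat set \<Rightarrow> nat set \<Rightarrow> 'k::comm_ring_1 mpoly" where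
  "dodgson n N src tgt d I J K =
     det (submatrix (graph_matrix n N src tgt d K)
            {i. i < N + n - 1 \<and> Suc i \<notin> I \<or> N \<le> i}
            {j. j < N + n - 1 \<and> Suc j \<notin> J \<or> N \<le> j})"

text \<open>Smoothness of the open subscheme V(f) \ (V(f) \<inter> V(g)) of the projective space with
  homogeneous coordinates alpha_e, e \<in> C, via the Jacobian criterion at points over the
  field 'k: if f is the zero polynomial, V(f) is the whole projective space (smooth);
  otherwise every point of V(f) outside V(g) must have a non-vanishing partial derivative.\<close>
definition open_hypersurface_smooth :: "nat set \<Rightarrow> 'k::field mpoly \<Rightarrow> 'k mpoly \<Rightarrow> bool" where
  "open_hypersurface_smooth C f g \<longleftrightarrow>
     f = 0 \<or>
     (\<forall>a :: nat \<Rightarrow> 'k. (\<exists>e\<in>C. a e \<noteq> 0) \<longrightarrow> mp_eval a f = 0 \<longrightarrow> mp_eval a g \<noteq> 0 \<longrightarrow>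
        (\<exists>e\<in>C. mp_eval a (mp_pderiv e f) \<noteq> 0))"

end

theory Submission
  imports Defs
begin

text \<open>Write \<open>\<Psi>\<^sup>1\<^sup>3\<^sup>,\<^sup>2\<^sup>3 = -det F\<close> and \<open>\<Psi>\<^sup>1\<^sup>,\<^sup>2\<^sub>3 = -det C\<close>, where \<open>F\<close> is the graph matrix with
  the rows of edges 1 and 3 replaced by unit rows and \<open>C\<close> is the graph matrix at \<open>\<alpha>\<^sub>3 = 0\<close> with
  the row of edge 1 replaced.  For \<open>e \<ge> 4\<close> the variable \<open>\<alpha>\<^sub>e\<close> occurs in \<open>F\<close> only on the diagonal,
  so \<open>\<partial>det F/\<partial>\<alpha>\<^sub>e\<close> is the determinant of \<open>F\<close> with the row of \<open>e\<close> replaced by a unit row; at a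
  singular point \<open>a\<close> of \<open>det F = 0\<close> all these determinants vanish.  Kernel vectors of such
  matrices are divergence-free currents, so by conservation at the trivalent vertex they vanish on
  edges 1, 2, 3, and on such currents the pairing through \<open>F(a)\<close> is symmetric.  Hence a kernel
  vector of \<open>F(a)\<close> with a replaced row lies in the kernel of \<open>F(a)\<close> itself.  Since \<open>C(a)\<close>
  differs from \<open>F(a)\<close> in one row only, \<open>det C(a) \<noteq> 0\<close> allows at most one kernel dimension, and
  together this leaves a kernel vector of \<open>F(a)\<close> supported on the vertex coordinates.  The vertex
  columns of \<open>F\<close> are constant, so that vector also kills the polynomial matrix: \<open>det F = 0\<close>.\<close>

section \<open>Evaluation of polynomials\<close>

definition monomial_eval :: "(nat \<Rightarrow> 'k::comm_ring_1) \<Rightarrow> (nat \<Rightarrow>\<^sub>0 nat) \<Rightarrow> 'k" where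
  "monomial_eval a m = (\<Prod>i\<in>Poly_Mapping.keys m. a i ^ Poly_Mapping.lookup m i)"

lemma monomial_eval_superset:
  "finite S \<Longrightarrow> Poly_Mapping.keys m \<subseteq> S \<Longrightarrow>
    monomial_eval a m = (\<Prod>i\<in>S. a i ^ Poly_Mapping.lookup m i)"
  unfolding monomial_eval_def by (rule prod.mono_neutral_left) (auto simp: in_keys_iff)

lemma monomial_eval_add: "monomial_eval a (m + m') = monomial_eval a m * monomial_eval a m'"
proof -
  let ?S = "Poly_Mapping.keys m \<union> Poly_Mapping.keys m'"
  have "monomial_eval a (m + m') = (\<Prod>i\<in>?S. a i ^ Poly_Mapping.lookup (m + m') i)"
    by (rule monomial_eval_superset) (auto simp: keys_add)
  also have "\<dots> = (\<Prod>i\<in>?S. a i ^ Poly_Mapping.lookup m i) * (\<Prod>i\<in>?S. a i ^ Poly_Mapping.lookup m' i)"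
    by (simp add: lookup_add power_add prod.distrib)
  also have "\<dots> = monomial_eval a m * monomial_eval a m'"
    by (subst (1 2) monomial_eval_superset[of ?S]) auto
  finally show ?thesis .
qed

lemma mp_eval_eq_sum_monomials:
  "mp_eval a p = (\<Sum>m\<in>Poly_Mapping.keys p. Poly_Mapping.lookup p m * monomial_eval a m)"
  unfolding mp_eval_def monomial_eval_def ..

lemma poly_mapping_eq_sum_single:
  "p = (\<Sum>m\<in>Poly_Mapping.keys p. Poly_Mapping.single m (Poly_Mapping.lookup p m))"
proof (rule poly_mapping_eqI)
  fix k
  have "Poly_Mapping.lookup (\<Sum>m\<in>Poly_Mapping.keys p. Poly_Mapping.single m (Poly_Mapping.lookup p m)) k
     = (\<Sum>m\<in>Poly_Mapping.keys p. (Poly_Mapping.lookup p m when m = k))"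
    by (simp add: lookup_sum lookup_single)
  also have "\<dots> = Poly_Mapping.lookup p k"
    by (cases "k \<in> Poly_Mapping.keys p") (auto simp: when_def in_keys_iff)
  finally show "Poly_Mapping.lookup p k =
      Poly_Mapping.lookup (\<Sum>m\<in>Poly_Mapping.keys p. Poly_Mapping.single m (Poly_Mapping.lookup p m)) k"
    by simp
qed

lemma mp_eval_add: "mp_eval a (p + q) = mp_eval a p + mp_eval a q"
  unfolding mp_eval_eq_sum_monomials
  by (rule setsum_keys_plus_distrib) (auto simp: distrib_right)

lemma mp_eval_single: "mp_eval a (Poly_Mapping.single m c) = c * monomial_eval a m"
  unfolding mp_eval_eq_sum_monomials by auto

lemma mp_eval_0 [simp]: "mp_eval a 0 = 0"
  by (simp add: mp_eval_def)

lemma mp_eval_sum: "mp_eval a (sum f S) = (\<Sum>x\<in>S. mp_eval a (f x))"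
  by (induction S rule: infinite_finite_induct) (auto simp: mp_eval_add)

lemma mp_eval_mult: "mp_eval a (p * q) = mp_eval a p * mp_eval a (q :: 'k::comm_ring_1 mpoly)"
proof -
  let ?P = "Poly_Mapping.keys p" and ?Q = "Poly_Mapping.keys q"
  have "p * q = (\<Sum>m\<in>?P. Poly_Mapping.single m (Poly_Mapping.lookup p m)) *
                (\<Sum>m'\<in>?Q. Poly_Mapping.single m' (Poly_Mapping.lookup q m'))"
    by (subst (1) poly_mapping_eq_sum_single, subst (1) poly_mapping_eq_sum_single[of q]) simp
  also have "\<dots> = (\<Sum>m\<in>?P. \<Sum>m'\<in>?Q.
      Poly_Mapping.single (m + m') (Poly_Mapping.lookup p m * Poly_Mapping.lookup q m'))"
    by (simp add: sum_product mult_single)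
  finally have "mp_eval a (p * q) = (\<Sum>m\<in>?P. \<Sum>m'\<in>?Q.
      (Poly_Mapping.lookup p m * monomial_eval a m) * (Poly_Mapping.lookup q m' * monomial_eval a m'))"
    by (simp add: mp_eval_sum mp_eval_single monomial_eval_add ac_simps)
  also have "\<dots> = mp_eval a p * mp_eval a q"
    by (simp add: mp_eval_eq_sum_monomials sum_product)
  finally show ?thesis .
qed

lemma mp_eval_one: "mp_eval a 1 = 1"
  by (simp add: mp_eval_eq_sum_monomials lookup_one monomial_eval_def)

interpretation mp_eval: comm_ring_hom "mp_eval a"
  by unfold_locales (auto simp: mp_eval_add mp_eval_mult mp_eval_one)

lemma mp_eval_var [simp]: "mp_eval a (mp_var i) = a i"
  by (simp add: mp_var_def mp_eval_single monomial_eval_def)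

lemma mp_eval_const [simp]: "mp_eval a (mp_const c) = c"
  by (simp add: mp_const_def mp_eval_single monomial_eval_def)

interpretation mp_const: comm_ring_hom mp_const
  by unfold_locales (auto simp: mp_const_def single_add mult_single)

definition var_free :: "nat \<Rightarrow> 'k::comm_ring_1 mpoly \<Rightarrow> bool" where
  "var_free e p \<longleftrightarrow> (\<forall>m\<in>Poly_Mapping.keys p. Poly_Mapping.lookup m e = 0)"

lemma var_free_add: "var_free e p \<Longrightarrow> var_free e q \<Longrightarrow> var_free e (p + q)"
  unfolding var_free_def using keys_add[of p q] by blast

lemma var_free_uminus: "var_free e p \<Longrightarrow> var_free e (- p)"
  unfolding var_free_def by (simp add: keys_def)

lemma var_free_mult: "var_free e p \<Longrightarrow> var_free e q \<Longrightarrow> var_free e (p * q)"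
  unfolding var_free_def using keys_mult by (fastforce simp: lookup_add)

lemma var_free_0: "var_free e 0"
  by (simp add: var_free_def)

lemma var_free_1: "var_free e 1"
  by (simp add: var_free_def keys_def lookup_one when_def)

lemma var_free_const: "var_free e (mp_const c)"
  by (simp add: var_free_def mp_const_def)

lemma var_free_var: "j \<noteq> e \<Longrightarrow> var_free e (mp_var j)"
  by (simp add: var_free_def mp_var_def lookup_single)

lemma var_free_sum: "(\<And>x. x \<in> S \<Longrightarrow> var_free e (f x)) \<Longrightarrow> var_free e (sum f S)"
  by (induction S rule: infinite_finite_induct) (auto simp: var_free_0 var_free_add)

lemma var_free_prod: "(\<And>x. x \<in> S \<Longrightarrow> var_free e (f x)) \<Longrightarrow> var_free e (prod f S)"
  by (induction S rule: infinite_finite_induct) (auto simp: var_free_1 var_free_mult)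

lemma var_free_power: "var_free e p \<Longrightarrow> var_free e (p ^ k)"
  by (induction k) (auto simp: var_free_1 var_free_mult)

lemma var_free_det:
  assumes "\<And>i j. i < dim_row A \<Longrightarrow> j < dim_col A \<Longrightarrow> var_free e (A $$ (i,j))"
  shows "var_free e (det A)"
  unfolding det_def using assms
  by (auto intro!: var_free_sum var_free_mult var_free_prod var_free_0 var_free_1 var_free_uminus
      simp: sign_def permutes_def)

lemma mp_pderiv_add: "mp_pderiv i (p + q) = mp_pderiv i p + mp_pderiv i q"
  unfolding mp_pderiv_def
  by (rule setsum_keys_plus_distrib) (auto simp: distrib_left single_add)

lemma mp_pderiv_0 [simp]: "mp_pderiv i 0 = 0"
  by (simp add: mp_pderiv_def)

lemma mp_pderiv_sum: "mp_pderiv i (sum f S) = (\<Sum>x\<in>S. mp_pderiv i (f x))"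
  by (induction S rule: infinite_finite_induct) (simp_all add: mp_pderiv_add)

lemma mp_pderiv_uminus: "mp_pderiv i (- p) = - mp_pderiv i p"
  using mp_pderiv_add[of i p "- p"] by (simp add: eq_neg_iff_add_eq_0 add.commute)

lemma mp_pderiv_single:
  "mp_pderiv i (Poly_Mapping.single k c) =
     Poly_Mapping.single (k - Poly_Mapping.single i 1) (of_nat (Poly_Mapping.lookup k i) * c)"
  unfolding mp_pderiv_def by auto

lemma mp_pderiv_var_free: "var_free e p \<Longrightarrow> mp_pderiv e p = 0"
  unfolding mp_pderiv_def var_free_def by (auto intro!: sum.neutral)

lemma mp_pderiv_var_mult: "var_free e X \<Longrightarrow> mp_pderiv e (mp_var e * X) = X"
proof -
  assume X: "var_free e X"
  let ?X = "Poly_Mapping.keys X"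
  have "mp_var e * X =
      (\<Sum>m\<in>?X. Poly_Mapping.single (Poly_Mapping.single e 1 + m) (Poly_Mapping.lookup X m))"
    unfolding mp_var_def by (subst (1) poly_mapping_eq_sum_single) (simp add: sum_distrib_left mult_single)
  hence "mp_pderiv e (mp_var e * X) = (\<Sum>m\<in>?X. Poly_Mapping.single m (Poly_Mapping.lookup X m))"
    using X unfolding var_free_def by (simp add: mp_pderiv_sum mp_pderiv_single lookup_add)
  also have "\<dots> = X" by (rule poly_mapping_eq_sum_single[symmetric])
  finally show ?thesis .
qed

lemma mp_pderiv_linear:
  "var_free e X \<Longrightarrow> var_free e Y \<Longrightarrow> mp_pderiv e (mp_var e * X + Y) = X"
  by (simp add: mp_pderiv_add mp_pderiv_var_mult mp_pderiv_var_free)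

definition replace_row_unit :: "'a::comm_ring_1 mat \<Rightarrow> nat \<Rightarrow> nat \<Rightarrow> 'a mat" where
  "replace_row_unit A r c = mat (dim_row A) (dim_col A)
     (\<lambda>(i,j). if i = r then (if j = c then 1 else 0) else A $$ (i,j))"

lemma replace_row_unit_carrier: "A \<in> carrier_mat m m \<Longrightarrow> replace_row_unit A r c \<in> carrier_mat m m"
  by (simp add: replace_row_unit_def)

lemma replace_row_unit_index:
  "i < dim_row A \<Longrightarrow> j < dim_col A \<Longrightarrow>
    replace_row_unit A r c $$ (i,j) = (if i = r then (if j = c then 1 else 0) else A $$ (i,j))"
  by (simp add: replace_row_unit_def)

lemma map_mat_replace_row_unit:
  "h 0 = 0 \<Longrightarrow> h 1 = 1 \<Longrightarrow> map_mat h (replace_row_unit A r c) = replace_row_unit (map_mat h A) r c"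
  by (rule eq_matI) (auto simp: replace_row_unit_def)

lemma mat_delete_replace_row_unit_same: "mat_delete (replace_row_unit A r c) r j = mat_delete A r j"
  by (rule eq_matI) (auto simp: mat_delete_def replace_row_unit_def)

lemma mat_delete_replace_row_unit:
  "r < i \<Longrightarrow> c < j \<Longrightarrow>
    mat_delete (replace_row_unit A r c) i j = replace_row_unit (mat_delete A i j) r c"
  by (rule eq_matI) (auto simp: mat_delete_def replace_row_unit_def)

lemma det_replace_row_unit:
  assumes A: "A \<in> carrier_mat m m" and r: "r < m" and c: "c < m"
  shows "det (replace_row_unit A r c) = cofactor A r c"
proof -
  have "det (replace_row_unit A r c) =
      (\<Sum>j<m. replace_row_unit A r c $$ (r,j) * cofactor (replace_row_unit A r c) r j)"
    by (rule laplace_expansion_row[OF replace_row_unit_carrier[OF A] r])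
  also have "\<dots> = (\<Sum>j<m. if j = c then cofactor A r j else 0)"
    by (rule sum.cong)
      (use A r in \<open>auto simp: replace_row_unit_index cofactor_def mat_delete_replace_row_unit_same\<close>)
  also have "\<dots> = cofactor A r c" using c by simp
  finally show ?thesis .
qed

lemma replace_row_unit_mult_vec:
  assumes A: "A \<in> carrier_mat m m" and z: "z \<in> carrier_vec m" and i: "i < m" and c: "c < m"
  shows "(replace_row_unit A r c *\<^sub>v z) $ i = (if i = r then z $ c else (A *\<^sub>v z) $ i)"
proof (cases "i = r")
  case True
  have "(replace_row_unit A r c *\<^sub>v z) $ i = (\<Sum>j<m. (if j = c then 1 else 0) * z $ j)"
    using A z i True by (simp add: scalar_prod_def replace_row_unit_def atLeast0LessThan)
  also have "\<dots> = (\<Sum>j<m. if j = c then z $ j else 0)" by (rule sum.cong) auto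
  finally show ?thesis using True c by simp
next
  case False
  then show ?thesis
    using A z i by (simp add: scalar_prod_def replace_row_unit_def atLeast0LessThan row_def)
qed

lemma pick_not_0_2: "pick {i. i \<noteq> 0 \<and> i \<noteq> (2::nat)} k = (if k = 0 then 1 else k + 2)"
  by (induction k) (auto intro!: Least_equality)

lemma pick_not_1_2: "pick {i. i \<noteq> 1 \<and> i \<noteq> (2::nat)} k = (if k = 0 then 0 else k + 2)"
  by (induction k) (auto intro!: Least_equality)

lemma pick_not_0: "pick {i. i \<noteq> (0::nat)} k = k + 1"
  by (induction k) (auto intro!: Least_equality)

lemma pick_not_1: "pick {i. i \<noteq> (1::nat)} k = (if k = 0 then 0 else k + 1)"
  by (induction k) (auto intro!: Least_equality)

lemma card_lessThan_minus: "finite B \<Longrightarrow> B \<subseteq> {..<m} \<Longrightarrow> card {i. i < m \<and> i \<notin> B} = m - card B"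
  using card_Diff_subset[of B "{..<m}"] by (simp add: set_diff_eq)

lemma submatrix_not_0_2_not_1_2:
  assumes A: "A \<in> carrier_mat m m" and m: "3 \<le> m"
  shows "submatrix A {i. i \<noteq> 0 \<and> i \<noteq> 2} {j. j \<noteq> 1 \<and> j \<noteq> 2} = mat_delete (mat_delete A 2 2) 0 1"
proof -
  define S where "S = {i::nat. i \<noteq> 0 \<and> i \<noteq> 2}"
  define T where "T = {j::nat. j \<noteq> 1 \<and> j \<noteq> 2}"
  have "card {i. i < m \<and> i \<in> S} = m - 2" "card {j. j < m \<and> j \<in> T} = m - 2"
    using card_lessThan_minus[of "{0,2}" m] card_lessThan_minus[of "{1,2}" m] m
    unfolding S_def T_def by auto
  then have "submatrix A S T = mat_delete (mat_delete A 2 2) 0 1"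
    by (intro eq_matI) (use A in \<open>auto simp: submatrix_def mat_delete_def
        pick_not_0_2[folded S_def] pick_not_1_2[folded T_def]\<close>)
  then show ?thesis unfolding S_def T_def .
qed

lemma submatrix_not_0_not_1:
  assumes A: "A \<in> carrier_mat m m" and m: "2 \<le> m"
  shows "submatrix A {i. i \<noteq> 0} {j. j \<noteq> 1} = mat_delete A 0 1"
proof -
  define S where "S = {i::nat. i \<noteq> 0}"
  define T where "T = {j::nat. j \<noteq> 1}"
  have "card {i. i < m \<and> i \<in> S} = m - 1" "card {j. j < m \<and> j \<in> T} = m - 1"
    using card_lessThan_minus[of "{0}" m] card_lessThan_minus[of "{1}" m] m
    unfolding S_def T_def by auto
  then have "submatrix A S T = mat_delete A 0 1"
    by (intro eq_matI) (use A in \<open>auto simp: submatrix_def mat_delete_def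
        pick_not_0[folded S_def] pick_not_1[folded T_def]\<close>)
  then show ?thesis unfolding S_def T_def .
qed

lemma det_submatrix_not_0_2_not_1_2:
  assumes A: "A \<in> carrier_mat m m" and m: "3 \<le> m"
  shows "det (submatrix A {i. i \<noteq> 0 \<and> i \<noteq> 2} {j. j \<noteq> 1 \<and> j \<noteq> 2}) =
           - det (replace_row_unit (replace_row_unit A 0 1) 2 2)"
proof -
  have "det (replace_row_unit (replace_row_unit A 0 1) 2 2) = cofactor (replace_row_unit A 0 1) 2 2"
    using det_replace_row_unit[OF replace_row_unit_carrier[OF A]] m by simp
  also have "\<dots> = det (replace_row_unit (mat_delete A 2 2) 0 1)"
    by (simp add: cofactor_def mat_delete_replace_row_unit)
  also have "\<dots> = cofactor (mat_delete A 2 2) 0 1"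
    by (rule det_replace_row_unit[of _ "m - 1"]) (use A m in auto)
  also have "\<dots> = - det (mat_delete (mat_delete A 2 2) 0 1)"
    by (simp add: cofactor_def)
  finally show ?thesis using submatrix_not_0_2_not_1_2[OF A m] by simp
qed

lemma det_submatrix_not_0_not_1:
  assumes A: "A \<in> carrier_mat m m" and m: "2 \<le> m"
  shows "det (submatrix A {i. i \<noteq> 0} {j. j \<noteq> 1}) = - det (replace_row_unit A 0 1)"
  using det_replace_row_unit[OF A, of 0 1] m submatrix_not_0_not_1[OF A m] by (simp add: cofactor_def)

lemma mp_pderiv_det_eq_det_replace_row_unit:
  fixes A :: "'k::comm_ring_1 mpoly mat"
  assumes A: "A \<in> carrier_mat m m" and i: "i < m" and diag: "A $$ (i,i) = mp_var e"
    and free: "\<And>r c. r < m \<Longrightarrow> c < m \<Longrightarrow> (r,c) \<noteq> (i,i) \<Longrightarrow> var_free e (A $$ (r,c))"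
  shows "mp_pderiv e (det A) = det (replace_row_unit A i i)"
proof -
  have cof: "var_free e (cofactor A i j)" if "j < m" for j
  proof -
    have "var_free e (det (mat_delete A i j))"
      by (rule var_free_det) (use A in \<open>auto simp: mat_delete_def intro!: free\<close>)
    then show ?thesis
      unfolding cofactor_def by (intro var_free_mult var_free_power var_free_uminus var_free_1)
  qed
  have "det A = A $$ (i,i) * cofactor A i i + (\<Sum>j\<in>{..<m}-{i}. A $$ (i,j) * cofactor A i j)"
    using laplace_expansion_row[OF A i] sum.remove[of "{..<m}" i] i by simp
  moreover have "var_free e (\<Sum>j\<in>{..<m}-{i}. A $$ (i,j) * cofactor A i j)"
    by (rule var_free_sum) (use i in \<open>auto intro!: var_free_mult cof free\<close>)
  ultimately have "mp_pderiv e (det A) = cofactor A i i"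
    using diag mp_pderiv_linear[OF cof[OF i]] by simp
  also have "\<dots> = det (replace_row_unit A i i)"
    by (rule det_replace_row_unit[OF A i i, symmetric])
  finally show ?thesis .
qed

text \<open>Over a ring that need not be a domain, a kernel vector shows singularity once one of its
  entries is \<open>1\<close>.\<close>

lemma det_eq_0_of_kernel_vector_entry_1:
  fixes A :: "'a::comm_ring_1 mat"
  assumes A: "A \<in> carrier_mat m m" and Y: "Y \<in> carrier_vec m" "A *\<^sub>v Y = 0\<^sub>v m"
    and k: "k < m" "Y $ k = 1"
  shows "det A = 0"
proof -
  have "(det A \<cdot>\<^sub>m 1\<^sub>m m) *\<^sub>v Y = adj_mat A *\<^sub>v (A *\<^sub>v Y)"
    using adj_mat[OF A] A Y by (metis assoc_mult_mat_vec)
  also have "\<dots> = 0\<^sub>v m"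
    unfolding Y(2) using adj_mat[OF A] by (intro eq_vecI) (auto simp: scalar_prod_def)
  finally have "((det A \<cdot>\<^sub>m 1\<^sub>m m) *\<^sub>v Y) $ k = 0" using k by simp
  moreover have "((det A \<cdot>\<^sub>m 1\<^sub>m m) *\<^sub>v Y) $ k = det A * Y $ k" using k Y by simp
  ultimately show ?thesis using k by simp
qed

lemma det_eq_0_of_constant_kernel_vector:
  fixes X :: "'k::field mpoly mat"
  assumes X: "X \<in> carrier_mat m m" and y: "y \<in> carrier_vec m" "y \<noteq> 0\<^sub>v m"
    and const: "\<And>i j. i < m \<Longrightarrow> j < m \<Longrightarrow> y $ j \<noteq> 0 \<Longrightarrow> X $$ (i,j) \<in> range mp_const"
    and ker: "map_mat (mp_eval a) X *\<^sub>v y = 0\<^sub>v m"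
  shows "det X = 0"
proof -
  obtain k where k: "k < m" "y $ k \<noteq> 0"
    using y by (metis carrier_vecD eq_vecI index_zero_vec)
  define Y where "Y = vec m (\<lambda>j. mp_const (y $ j / y $ k))"
  have lift: "X $$ (i,j) * mp_const (y $ j / y $ k) = mp_const (mp_eval a (X $$ (i,j)) * y $ j / y $ k)"
    if "i < m" "j < m" for i j
  proof (cases "y $ j = 0")
    case False
    from const[OF that False] obtain c where "X $$ (i,j) = mp_const c" by (rule rangeE)
    then show ?thesis by (simp add: mp_const.hom_mult[symmetric])
  qed simp
  have XY: "X *\<^sub>v Y = 0\<^sub>v m"
  proof (rule eq_vecI)
    fix i assume "i < dim_vec (0\<^sub>v m :: 'k mpoly vec)"
    then have i: "i < m" by simp
    have "(X *\<^sub>v Y) $ i = (\<Sum>j<m. mp_const (mp_eval a (X $$ (i,j)) * y $ j / y $ k))"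
      using X i lift by (simp add: scalar_prod_def Y_def atLeast0LessThan)
    also have "\<dots> = mp_const ((map_mat (mp_eval a) X *\<^sub>v y) $ i / y $ k)"
      using X i y by (simp add: mp_const.hom_sum sum_divide_distrib scalar_prod_def atLeast0LessThan)
    also have "\<dots> = 0" using ker i by simp
    finally show "(X *\<^sub>v Y) $ i = 0\<^sub>v m $ i" using i by simp
  qed (use X in simp)
  show ?thesis
    by (rule det_eq_0_of_kernel_vector_entry_1[OF X _ XY k(1)]) (use k in \<open>simp_all add: Y_def\<close>)
qed

section \<open>Currents and potentials on the graph\<close>

lemma sum_lessThan_add: "(\<Sum>j<a + b. f j) = (\<Sum>j<a. f j) + (\<Sum>k<(b::nat). f (a + k))"
  by (induction b) (auto simp: add.assoc)

lemma sum_vcol: "d < n \<Longrightarrow> (\<Sum>k<n-1. f (vcol d k)) = (\<Sum>p\<in>{..<n}-{d}. f p)"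
  by (rule sum.reindex_bij_witness[of _ "\<lambda>p. if p < d then p else p - 1" "vcol d"])
    (auto simp: vcol_def)

locale graph_with_trivalent_vertex =
  fixes n N :: nat and src tgt :: "nat \<Rightarrow> nat" and v d :: nat
  assumes loopless: "loopless_graph n N src tgt" and v_lt_n: "v < n" and d_lt_n: "d < n"
    and edges_at_v: "{e \<in> {1..N}. src e = v \<or> tgt e = v} = {1, 2, 3}"
begin

lemma three_le_N: "3 \<le> N"
proof -
  have "3 \<in> {e \<in> {1..N}. src e = v \<or> tgt e = v}" using edges_at_v by simp
  then show ?thesis by simp
qed

lemma edge_ends: "e \<in> {1..N} \<Longrightarrow> src e < n \<and> tgt e < n \<and> src e \<noteq> tgt e"
  using loopless unfolding loopless_graph_def by blast

lemma sum_eps_vertices: assumes "e \<in> {1..N}" shows "(\<Sum>p<n. of_int (eps src tgt e p) :: 'a::comm_ring_1) = 0"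
proof -
  have "(\<Sum>p<n. of_int (eps src tgt e p) :: 'a) =
      (\<Sum>p<n. (if p = src e then 1 else 0) - (if p = tgt e then 1 else 0))"
    using edge_ends[OF assms] by (intro sum.cong) (auto simp: eps_def)
  then show ?thesis using edge_ends[OF assms] by (simp add: sum_subtractf)
qed

lemma sum_eps_vcol:
  assumes "e \<in> {1..N}"
  shows "(\<Sum>k<n-1. of_int (eps src tgt e (vcol d k)) :: 'a::comm_ring_1) = - of_int (eps src tgt e d)"
proof -
  have "(\<Sum>p<n. of_int (eps src tgt e p) :: 'a) =
      of_int (eps src tgt e d) + (\<Sum>p\<in>{..<n}-{d}. of_int (eps src tgt e p))"
    by (rule sum.remove) (use d_lt_n in auto)
  then have "(\<Sum>p\<in>{..<n}-{d}. of_int (eps src tgt e p) :: 'a) = - of_int (eps src tgt e d)"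
    using sum_eps_vertices[OF assms] by (metis add.commute eq_neg_iff_add_eq_0)
  then show ?thesis using sum_vcol[OF d_lt_n, of "\<lambda>p. of_int (eps src tgt e p) :: 'a"] by simp
qed

text \<open>The vertex block of a vector \<open>z\<close> of length \<open>N + n - 1\<close> is a potential (with the deleted
  vertex \<open>d\<close> grounded), its edge block a current; these are the two halves of \<open>M\<^sub>G z\<close>.\<close>

definition potential_diff :: "'a::comm_ring_1 vec \<Rightarrow> nat \<Rightarrow> 'a" where
  "potential_diff z e = (\<Sum>k<n-1. of_int (eps src tgt e (vcol d k)) * z $ (N + k))"

definition divergence :: "'a::comm_ring_1 vec \<Rightarrow> nat \<Rightarrow> 'a" where
  "divergence z k = (\<Sum>j<N. of_int (eps src tgt (Suc j) (vcol d k)) * z $ j)"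

lemma potential_diff_lincomb:
  assumes "x \<in> carrier_vec (N+n-1)" "y \<in> carrier_vec (N+n-1)"
  shows "potential_diff (c \<cdot>\<^sub>v x - c' \<cdot>\<^sub>v y) e = c * potential_diff x e - c' * potential_diff y e"
proof -
  have "potential_diff (c \<cdot>\<^sub>v x - c' \<cdot>\<^sub>v y) e =
      (\<Sum>k<n-1. of_int (eps src tgt e (vcol d k)) * (c * x $ (N+k) - c' * y $ (N+k)))"
    unfolding potential_diff_def using assms by (intro sum.cong) auto
  then show ?thesis
    unfolding potential_diff_def by (simp add: sum_subtractf sum_distrib_left algebra_simps)
qed

text \<open>The equation of the deleted vertex \<open>d\<close> is minus the sum of all the others.\<close>

lemma divergence_free_at_vertex:
  fixes z :: "'a::comm_ring_1 vec"
  assumes div: "\<And>k. k < n - 1 \<Longrightarrow> divergence z k = 0" and p: "p < n"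
  shows "(\<Sum>j<N. of_int (eps src tgt (Suc j) p) * z $ j) = 0"
proof (cases "p = d")
  case False
  define k where "k = (if p < d then p else p - 1)"
  have k: "k < n - 1" "vcol d k = p" using False p d_lt_n by (auto simp: k_def vcol_def)
  show ?thesis using div[OF k(1)] unfolding divergence_def k(2) .
next
  case True
  have "0 = (\<Sum>k<n-1. divergence z k)" using div by simp
  also have "\<dots> = (\<Sum>j<N. z $ j * (\<Sum>k<n-1. of_int (eps src tgt (Suc j) (vcol d k))))"
    unfolding divergence_def by (subst sum.swap) (simp add: sum_distrib_left ac_simps)
  also have "\<dots> = - (\<Sum>j<N. of_int (eps src tgt (Suc j) p) * z $ j)"
    unfolding sum_negf[symmetric]
  proof (intro sum.cong refl)
    fix j assume "j \<in> {..<N}"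
    then have "Suc j \<in> {1..N}" by auto
    from sum_eps_vcol[OF this, where 'a='a]
    show "z $ j * (\<Sum>k<n-1. of_int (eps src tgt (Suc j) (vcol d k))) =
        - (of_int (eps src tgt (Suc j) p) * z $ j)"
      by (simp add: True)
  qed
  finally show ?thesis by simp
qed

lemma divergence_free_edge_1:
  fixes z :: "'a::field vec"
  assumes z1: "z $ 1 = 0" and z2: "z $ 2 = 0" and div: "\<And>k. k < n - 1 \<Longrightarrow> divergence z k = 0"
  shows "z $ 0 = 0"
proof -
  have "1 \<in> {e \<in> {1..N}. src e = v \<or> tgt e = v}" using edges_at_v by simp
  then have eps1: "of_int (eps src tgt 1 v) \<noteq> (0::'a)"
    using edge_ends[of 1] by (auto simp: eps_def)
  have other: "of_int (eps src tgt (Suc j) v) * z $ j = 0" if "j \<in> {..<N} - {0}" for j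
  proof (cases "j = 1 \<or> j = 2")
    case False
    then have "Suc j \<notin> {e \<in> {1..N}. src e = v \<or> tgt e = v}"
      unfolding edges_at_v using that by auto
    then show ?thesis using that by (auto simp: eps_def)
  qed (use z1 z2 in auto)
  have "(\<Sum>j<N. of_int (eps src tgt (Suc j) v) * z $ j) =
      of_int (eps src tgt (Suc 0) v) * z $ 0 + (\<Sum>j\<in>{..<N}-{0}. of_int (eps src tgt (Suc j) v) * z $ j)"
    by (rule sum.remove) (use three_le_N in auto)
  then show ?thesis using other divergence_free_at_vertex[OF div v_lt_n] eps1 by simp
qed

lemma divergence_free_orthogonal_potential:
  fixes w u :: "'a::comm_ring_1 vec"
  assumes w: "\<And>j. j < 3 \<Longrightarrow> w $ j = 0" and div: "\<And>k. k < n - 1 \<Longrightarrow> divergence w k = 0"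
  shows "(\<Sum>i\<in>{3..<N}. w $ i * potential_diff u (Suc i)) = 0"
proof -
  have "(\<Sum>i\<in>{3..<N}. w $ i * potential_diff u (Suc i)) =
      (\<Sum>i\<in>{3..<N}. \<Sum>k<n-1. u $ (N+k) * (of_int (eps src tgt (Suc i) (vcol d k)) * w $ i))"
    unfolding potential_diff_def by (simp add: sum_distrib_left ac_simps)
  also have "\<dots> =
      (\<Sum>k<n-1. u $ (N+k) * (\<Sum>i\<in>{3..<N}. of_int (eps src tgt (Suc i) (vcol d k)) * w $ i))"
    by (subst sum.swap) (simp add: sum_distrib_left)
  also have "\<dots> = (\<Sum>k<n-1. u $ (N+k) * divergence w k)"
    unfolding divergence_def
    by (intro sum.cong refl arg_cong[where f="(*) _"] sum.mono_neutral_left) (use w in auto)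
  also have "\<dots> = 0" using div by simp
  finally show ?thesis .
qed

end

context graph_with_trivalent_vertex
begin

lemma n_pos: "1 \<le> n"
  using v_lt_n by simp

definition graph_matrix_at :: "(nat \<Rightarrow> 'a::comm_ring_1) \<Rightarrow> nat set \<Rightarrow> 'a mat" where
  "graph_matrix_at a K = mat (N + n - 1) (N + n - 1) (\<lambda>(i,j).
     if i < N \<and> j < N then (if i = j \<and> Suc i \<notin> K then a (Suc i) else 0)
     else if i < N then of_int (eps src tgt (Suc i) (vcol d (j - N)))
     else if j < N then of_int (- eps src tgt (Suc j) (vcol d (i - N)))
     else 0)"

text \<open>Row and column indices \<open>0, 1, 2\<close> belong to the edges \<open>1, 2, 3\<close>.\<close>

definition F_at :: "(nat \<Rightarrow> 'a::comm_ring_1) \<Rightarrow> 'a mat" where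
  "F_at a = replace_row_unit (replace_row_unit (graph_matrix_at a {}) 0 1) 2 2"

definition C_at :: "(nat \<Rightarrow> 'a::comm_ring_1) \<Rightarrow> 'a mat" where
  "C_at a = replace_row_unit (graph_matrix_at a {3}) 0 1"

lemma graph_matrix_at_carrier: "graph_matrix_at a K \<in> carrier_mat (N+n-1) (N+n-1)"
  by (simp add: graph_matrix_at_def)

lemma F_at_carrier: "F_at a \<in> carrier_mat (N+n-1) (N+n-1)"
  unfolding F_at_def by (intro replace_row_unit_carrier graph_matrix_at_carrier)

lemma C_at_carrier: "C_at a \<in> carrier_mat (N+n-1) (N+n-1)"
  unfolding C_at_def by (intro replace_row_unit_carrier graph_matrix_at_carrier)

lemma graph_matrix_at_mult_vec_edge:
  assumes i: "i < N" and z: "z \<in> carrier_vec (N+n-1)"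
  shows "(graph_matrix_at a K *\<^sub>v z) $ i =
           (if Suc i \<in> K then 0 else a (Suc i) * z $ i) + potential_diff z (Suc i)"
proof -
  have "(graph_matrix_at a K *\<^sub>v z) $ i = (\<Sum>j<N+(n-1). graph_matrix_at a K $$ (i,j) * z $ j)"
    using i z n_pos by (simp add: graph_matrix_at_def scalar_prod_def atLeast0LessThan)
  also have "\<dots> = (\<Sum>j<N. graph_matrix_at a K $$ (i,j) * z $ j) +
      (\<Sum>k<n-1. graph_matrix_at a K $$ (i,N+k) * z $ (N+k))"
    by (rule sum_lessThan_add)
  also have "(\<Sum>j<N. graph_matrix_at a K $$ (i,j) * z $ j) =
      (\<Sum>j<N. if j = i then (if Suc i \<in> K then 0 else a (Suc i) * z $ i) else 0)"
    by (rule sum.cong) (use i n_pos in \<open>auto simp: graph_matrix_at_def\<close>)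
  also have "(\<Sum>k<n-1. graph_matrix_at a K $$ (i,N+k) * z $ (N+k)) = potential_diff z (Suc i)"
    unfolding potential_diff_def by (rule sum.cong) (use i n_pos in \<open>auto simp: graph_matrix_at_def\<close>)
  finally show ?thesis using i by simp
qed

lemma graph_matrix_at_mult_vec_vertex:
  assumes k: "k < n - 1" and z: "z \<in> carrier_vec (N+n-1)"
  shows "(graph_matrix_at a K *\<^sub>v z) $ (N+k) = - divergence z k"
proof -
  have "(graph_matrix_at a K *\<^sub>v z) $ (N+k) = (\<Sum>j<N+(n-1). graph_matrix_at a K $$ (N+k,j) * z $ j)"
    using k z by (simp add: graph_matrix_at_def scalar_prod_def atLeast0LessThan)
  also have "\<dots> = (\<Sum>j<N. graph_matrix_at a K $$ (N+k,j) * z $ j) +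
      (\<Sum>k'<n-1. graph_matrix_at a K $$ (N+k,N+k') * z $ (N+k'))"
    by (rule sum_lessThan_add)
  also have "(\<Sum>k'<n-1. graph_matrix_at a K $$ (N+k,N+k') * z $ (N+k')) = 0"
    by (rule sum.neutral) (use k in \<open>auto simp: graph_matrix_at_def\<close>)
  also have "(\<Sum>j<N. graph_matrix_at a K $$ (N+k,j) * z $ j) =
      (\<Sum>j<N. - (of_int (eps src tgt (Suc j) (vcol d k)) * z $ j))"
    by (rule sum.cong) (use k in \<open>auto simp: graph_matrix_at_def\<close>)
  finally show ?thesis unfolding divergence_def by (simp add: sum_negf)
qed

lemma F_at_mult_vec:
  assumes z: "z \<in> carrier_vec (N+n-1)"
  shows "(F_at a *\<^sub>v z) $ 0 = z $ 1"
    and "(F_at a *\<^sub>v z) $ 2 = z $ 2"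
    and "i < N \<Longrightarrow> i \<noteq> 0 \<Longrightarrow> i \<noteq> 2 \<Longrightarrow> (F_at a *\<^sub>v z) $ i = a (Suc i) * z $ i + potential_diff z (Suc i)"
    and "k < n - 1 \<Longrightarrow> (F_at a *\<^sub>v z) $ (N+k) = - divergence z k"
proof -
  have D: "3 \<le> N + n - 1" using three_le_N n_pos by simp
  note R2 = replace_row_unit_mult_vec[OF replace_row_unit_carrier[OF graph_matrix_at_carrier] z,
      where r=2 and c=2]
  note R1 = replace_row_unit_mult_vec[OF graph_matrix_at_carrier z, where r=0 and c=1]
  show "(F_at a *\<^sub>v z) $ 0 = z $ 1" unfolding F_at_def using R2[of 0] R1[of 0] D by simp
  show "(F_at a *\<^sub>v z) $ 2 = z $ 2" unfolding F_at_def using R2[of 2] D by simp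
  show "i < N \<Longrightarrow> i \<noteq> 0 \<Longrightarrow> i \<noteq> 2 \<Longrightarrow> (F_at a *\<^sub>v z) $ i = a (Suc i) * z $ i + potential_diff z (Suc i)"
    unfolding F_at_def using R2[of i] R1[of i] D n_pos graph_matrix_at_mult_vec_edge[OF _ z, of i a "{}"]
    by simp
  show "k < n - 1 \<Longrightarrow> (F_at a *\<^sub>v z) $ (N+k) = - divergence z k"
    unfolding F_at_def using R2[of "N+k"] R1[of "N+k"] D three_le_N
      graph_matrix_at_mult_vec_vertex[OF _ z, of k a "{}"]
    by simp
qed

text \<open>\<open>C\<close> differs from \<open>F\<close> only in the row of edge 3, where \<open>\<alpha>\<^sub>3 = 0\<close> leaves the potential difference.\<close>

lemma C_at_mult_vec_eq_F_at:
  assumes z: "z \<in> carrier_vec (N+n-1)" and i: "i < N+n-1" "i \<noteq> 2"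
  shows "(C_at a *\<^sub>v z) $ i = (F_at a *\<^sub>v z) $ i"
proof -
  have D: "3 \<le> N + n - 1" using three_le_N n_pos by simp
  note R1 = replace_row_unit_mult_vec[OF graph_matrix_at_carrier z i(1), where r=0 and c=1]
  show ?thesis
  proof (cases "i < N")
    case True
    then show ?thesis
      unfolding C_at_def using R1 D i F_at_mult_vec(1,3)[OF z] graph_matrix_at_mult_vec_edge[OF True z]
      by (cases "i = 0") (simp_all add: numeral_3_eq_3)
  next
    case False
    define k where "k = i - N"
    have k: "k < n - 1" "i = N + k" using False i by (auto simp: k_def)
    then show ?thesis
      unfolding C_at_def using R1 D three_le_N F_at_mult_vec(4)[OF z k(1)]
        graph_matrix_at_mult_vec_vertex[OF k(1) z]
      by simp
  qed
qed

lemma C_at_mult_vec_edge_3: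
  assumes z: "z \<in> carrier_vec (N+n-1)"
  shows "(C_at a *\<^sub>v z) $ 2 = potential_diff z 3"
  unfolding C_at_def
  using replace_row_unit_mult_vec[OF graph_matrix_at_carrier[of a "{3}"] z, where i=2 and c=1 and r=0]
    three_le_N n_pos
    graph_matrix_at_mult_vec_edge[OF _ z, of 2 a "{3}"]
  by (simp add: numeral_3_eq_3)

end

section \<open>Kernels at a singular point\<close>

context graph_with_trivalent_vertex
begin

lemma F_at_kernel_currents:
  fixes z :: "'a::field vec"
  assumes z: "z \<in> carrier_vec (N+n-1)" and E: "E \<subseteq> {3..<N}"
    and rows: "\<And>i. i < N+n-1 \<Longrightarrow> i \<notin> E \<Longrightarrow> (F_at a *\<^sub>v z) $ i = 0"
  shows "\<forall>j<3. z $ j = 0" and "\<forall>k<n-1. divergence z k = 0"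
proof -
  have D: "3 \<le> N + n - 1" using three_le_N n_pos by simp
  show div: "\<forall>k<n-1. divergence z k = 0"
  proof (intro allI impI)
    fix k assume k: "k < n - 1"
    then have "N + k < N+n-1" "N + k \<notin> E" using E by auto
    then show "divergence z k = 0" using rows F_at_mult_vec(4)[OF z k, of a] by simp
  qed
  have "0 \<notin> E" "2 \<notin> E" using E by auto
  then have "z $ 1 = 0" "z $ 2 = 0" using rows[of 0] rows[of 2] F_at_mult_vec(1,2)[OF z, of a] D by auto
  moreover from this have "z $ 0 = 0" using divergence_free_edge_1 div by blast
  ultimately show "\<forall>j<3. z $ j = 0" by (auto simp: numeral_3_eq_3 numeral_2_eq_2 less_Suc_eq)
qed

lemma F_at_mult_vec_edge:
  "z \<in> carrier_vec (N+n-1) \<Longrightarrow> i \<in> {3..<N} \<Longrightarrow>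
    (F_at a *\<^sub>v z) $ i = a (Suc i) * z $ i + potential_diff z (Suc i)"
  by (intro F_at_mult_vec(3)) auto

text \<open>For currents vanishing on edges 1, 2, 3 the pairing \<open>z\<^sub>0 \<cdot> F z\<close> is symmetric: the edge block
  of \<open>F\<close> is diagonal and the vertex blocks are opposite transposes.\<close>

lemma F_at_pairing_symmetric:
  fixes z z0 :: "'a::field vec"
  assumes z: "z \<in> carrier_vec (N+n-1)" "\<forall>j<3. z $ j = 0" "\<forall>k<n-1. divergence z k = 0"
    and z0: "z0 \<in> carrier_vec (N+n-1)" "\<forall>j<3. z0 $ j = 0" "\<forall>k<n-1. divergence z0 k = 0"
  shows "(\<Sum>i\<in>{3..<N}. z0 $ i * (F_at a *\<^sub>v z) $ i) = (\<Sum>i\<in>{3..<N}. z $ i * (F_at a *\<^sub>v z0) $ i)"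
proof -
  have "(\<Sum>i\<in>{3..<N}. z0 $ i * (F_at a *\<^sub>v z) $ i) =
      (\<Sum>i\<in>{3..<N}. a (Suc i) * z0 $ i * z $ i) + (\<Sum>i\<in>{3..<N}. z0 $ i * potential_diff z (Suc i))"
    by (simp add: F_at_mult_vec_edge[OF z(1)] sum.distrib algebra_simps)
  also have "\<dots> = (\<Sum>i\<in>{3..<N}. a (Suc i) * z0 $ i * z $ i) +
      (\<Sum>i\<in>{3..<N}. z $ i * potential_diff z0 (Suc i))"
    using divergence_free_orthogonal_potential[of z0 z] divergence_free_orthogonal_potential[of z z0] z z0
    by simp
  also have "\<dots> = (\<Sum>i\<in>{3..<N}. z $ i * (F_at a *\<^sub>v z0) $ i)"
    by (simp add: F_at_mult_vec_edge[OF z0(1)] sum.distrib algebra_simps)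
  finally show ?thesis .
qed

lemma replace_row_unit_kernel_in_F_at_kernel:
  fixes z z0 :: "'a::field vec"
  assumes z0: "z0 \<in> carrier_vec (N+n-1)" "F_at a *\<^sub>v z0 = 0\<^sub>v (N+n-1)"
    and i0: "i0 \<in> {3..<N}" "z0 $ i0 \<noteq> 0"
    and z: "z \<in> carrier_vec (N+n-1)" "replace_row_unit (F_at a) i0 i0 *\<^sub>v z = 0\<^sub>v (N+n-1)"
  shows "F_at a *\<^sub>v z = 0\<^sub>v (N+n-1)" and "z $ i0 = 0"
proof -
  have i0D: "i0 < N+n-1" using i0 n_pos by auto
  have replaced: "(replace_row_unit (F_at a) i0 i0 *\<^sub>v z) $ i =
      (if i = i0 then z $ i0 else (F_at a *\<^sub>v z) $ i)" if "i < N+n-1" for i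
    by (rule replace_row_unit_mult_vec[OF F_at_carrier z(1) that i0D])
  show zi0: "z $ i0 = 0" using replaced[OF i0D] z(2) i0D by simp
  have rows: "(F_at a *\<^sub>v z) $ i = 0" if "i < N+n-1" "i \<notin> {i0}" for i
    using replaced[OF that(1)] z(2) that by simp
  have rows0: "(F_at a *\<^sub>v z0) $ i = 0" if "i < N+n-1" for i
    using z0(2) that by simp
  have cz: "\<forall>j<3. z $ j = 0" "\<forall>k<n-1. divergence z k = 0"
    using F_at_kernel_currents[OF z(1), where E="{i0}" and a=a] rows i0(1) by auto
  have cz0: "\<forall>j<3. z0 $ j = 0" "\<forall>k<n-1. divergence z0 k = 0"
    using F_at_kernel_currents[OF z0(1), where E="{}" and a=a] rows0 by auto
  have "(\<Sum>i\<in>{3..<N}. z0 $ i * (F_at a *\<^sub>v z) $ i) = (\<Sum>i\<in>{3..<N}. z $ i * (F_at a *\<^sub>v z0) $ i)"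
    by (rule F_at_pairing_symmetric[OF z(1) cz z0(1) cz0])
  also have "\<dots> = 0" by (rule sum.neutral) (use rows0 n_pos in auto)
  finally have "(\<Sum>i\<in>{3..<N}. z0 $ i * (F_at a *\<^sub>v z) $ i) = 0" .
  moreover have "(\<Sum>i\<in>{3..<N}. z0 $ i * (F_at a *\<^sub>v z) $ i) =
      z0 $ i0 * (F_at a *\<^sub>v z) $ i0 + (\<Sum>i\<in>{3..<N}-{i0}. z0 $ i * (F_at a *\<^sub>v z) $ i)"
    by (rule sum.remove) (use i0 in auto)
  moreover have "(\<Sum>i\<in>{3..<N}-{i0}. z0 $ i * (F_at a *\<^sub>v z) $ i) = 0"
    by (rule sum.neutral) (use rows n_pos in auto)
  ultimately have "(F_at a *\<^sub>v z) $ i0 = 0" using i0(2) by simp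
  then show "F_at a *\<^sub>v z = 0\<^sub>v (N+n-1)"
    using rows F_at_carrier by (intro eq_vecI) auto
qed

lemma det_C_at_eq_0_of_F_at_kernel:
  fixes z :: "'a::field vec"
  assumes z: "z \<in> carrier_vec (N+n-1)" "z \<noteq> 0\<^sub>v (N+n-1)" "F_at a *\<^sub>v z = 0\<^sub>v (N+n-1)"
    and p3: "potential_diff z 3 = 0"
  shows "det (C_at a) = 0"
proof -
  have "C_at a *\<^sub>v z = 0\<^sub>v (N+n-1)"
  proof (rule eq_vecI)
    fix i assume "i < dim_vec (0\<^sub>v (N+n-1) :: 'a vec)"
    then show "(C_at a *\<^sub>v z) $ i = 0\<^sub>v (N+n-1) $ i"
      using z(3) p3 C_at_mult_vec_eq_F_at[OF z(1)] C_at_mult_vec_edge_3[OF z(1)]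
      by (cases "i = 2") auto
  qed (use C_at_carrier[of a] in simp)
  then show ?thesis using z(1,2) det_0_iff_vec_prod_zero_field[OF C_at_carrier] by blast
qed

text \<open>So a regular \<open>C(a)\<close> leaves room for at most one kernel dimension of \<open>F(a)\<close>: a suitable
  combination of two independent kernel vectors has vanishing potential difference on edge 3.\<close>

lemma det_C_at_eq_0_of_F_at_kernel_pair:
  fixes z z0 :: "'a::field vec"
  assumes z: "z \<in> carrier_vec (N+n-1)" "z \<noteq> 0\<^sub>v (N+n-1)" "F_at a *\<^sub>v z = 0\<^sub>v (N+n-1)"
    and z0: "z0 \<in> carrier_vec (N+n-1)" "F_at a *\<^sub>v z0 = 0\<^sub>v (N+n-1)"
    and i0: "i0 < N+n-1" "z $ i0 = 0" "z0 $ i0 \<noteq> 0"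
  shows "det (C_at a) = 0"
proof (cases "potential_diff z 3 = 0")
  case True
  then show ?thesis by (rule det_C_at_eq_0_of_F_at_kernel[OF z])
next
  case False
  define y where "y = potential_diff z0 3 \<cdot>\<^sub>v z - potential_diff z 3 \<cdot>\<^sub>v z0"
  have y: "y \<in> carrier_vec (N+n-1)" using z z0 by (simp add: y_def)
  have "y $ i0 \<noteq> 0" using i0 z(1) z0(1) False by (simp add: y_def)
  then have "y \<noteq> 0\<^sub>v (N+n-1)" using i0 by auto
  moreover have "F_at a *\<^sub>v y =
      potential_diff z0 3 \<cdot>\<^sub>v (F_at a *\<^sub>v z) - potential_diff z 3 \<cdot>\<^sub>v (F_at a *\<^sub>v z0)"
    unfolding y_def using z z0
    by (simp add: mult_minus_distrib_mat_vec[OF F_at_carrier] mult_mat_vec[OF F_at_carrier])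
  then have "F_at a *\<^sub>v y = 0\<^sub>v (N+n-1)" using z(3) z0(2) by auto
  moreover have "potential_diff y 3 = 0"
    unfolding y_def potential_diff_lincomb[OF z(1) z0(1)] by (simp add: mult.commute)
  ultimately show ?thesis by (rule det_C_at_eq_0_of_F_at_kernel[OF y])
qed

lemma F_at_vertex_kernel:
  fixes a :: "nat \<Rightarrow> 'a::field"
  assumes F: "det (F_at a) = 0"
    and F_replaced: "\<And>i. i \<in> {3..<N} \<Longrightarrow> det (replace_row_unit (F_at a) i i) = 0"
    and C: "det (C_at a) \<noteq> 0"
  obtains y where "y \<in> carrier_vec (N+n-1)" "y \<noteq> 0\<^sub>v (N+n-1)" "F_at a *\<^sub>v y = 0\<^sub>v (N+n-1)"
    "\<And>j. j < N \<Longrightarrow> y $ j = 0"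
proof -
  obtain z0 where z0: "z0 \<in> carrier_vec (N+n-1)" "z0 \<noteq> 0\<^sub>v (N+n-1)" "F_at a *\<^sub>v z0 = 0\<^sub>v (N+n-1)"
    using det_0_iff_vec_prod_zero_field[OF F_at_carrier] F by blast
  have "z0 $ j = 0" if j: "j < N" for j
  proof (rule ccontr)
    assume z0j: "z0 $ j \<noteq> 0"
    have "\<forall>j<3. z0 $ j = 0" using F_at_kernel_currents(1)[OF z0(1), where E="{}" and a=a] z0(3) by simp
    then have j3: "j \<in> {3..<N}" using j z0j by (metis atLeastLessThan_iff not_less)
    obtain z where z: "z \<in> carrier_vec (N+n-1)" "z \<noteq> 0\<^sub>v (N+n-1)"
      "replace_row_unit (F_at a) j j *\<^sub>v z = 0\<^sub>v (N+n-1)"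
      using det_0_iff_vec_prod_zero_field[OF replace_row_unit_carrier[OF F_at_carrier]] F_replaced[OF j3]
      by blast
    note z_kernel = replace_row_unit_kernel_in_F_at_kernel[OF z0(1,3) j3 z0j z(1,3)]
    have "det (C_at a) = 0"
      by (rule det_C_at_eq_0_of_F_at_kernel_pair[OF z(1,2) z_kernel(1) z0(1,3) _ z_kernel(2) z0j])
        (use j n_pos in simp)
    with C show False by contradiction
  qed
  then show thesis using that z0 by blast
qed

end

context graph_with_trivalent_vertex
begin

definition F_poly :: "'a::comm_ring_1 mpoly mat" where
  "F_poly = replace_row_unit (replace_row_unit (graph_matrix n N src tgt d {}) 0 1) 2 2"

definition C_poly :: "'a::comm_ring_1 mpoly mat" where
  "C_poly = replace_row_unit (graph_matrix n N src tgt d {3}) 0 1"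

lemma graph_matrix_carrier: "graph_matrix n N src tgt d K \<in> carrier_mat (N+n-1) (N+n-1)"
  by (simp add: graph_matrix_def)

lemma F_poly_carrier: "F_poly \<in> carrier_mat (N+n-1) (N+n-1)"
  unfolding F_poly_def by (intro replace_row_unit_carrier graph_matrix_carrier)

lemma dodgson_13_23_eq_det_F_poly:
  "dodgson n N src tgt d {1,3} {2,3} {} = - det (F_poly :: 'a::comm_ring_1 mpoly mat)"
proof -
  have rows: "{i. i < N+n-1 \<and> Suc i \<notin> {1,3} \<or> N \<le> i} = {i. i \<noteq> 0 \<and> i \<noteq> 2}"
    and cols: "{j. j < N+n-1 \<and> Suc j \<notin> {2,3} \<or> N \<le> j} = {j. j \<noteq> 1 \<and> j \<noteq> 2}"
    using three_le_N n_pos by auto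
  show ?thesis
    unfolding dodgson_def F_poly_def rows cols
    by (rule det_submatrix_not_0_2_not_1_2[OF graph_matrix_carrier]) (use three_le_N n_pos in simp)
qed

lemma dodgson_1_2_3_eq_det_C_poly:
  "dodgson n N src tgt d {1} {2} {3} = - det (C_poly :: 'a::comm_ring_1 mpoly mat)"
proof -
  have rows: "{i. i < N+n-1 \<and> Suc i \<notin> {1} \<or> N \<le> i} = {i. i \<noteq> 0}"
    and cols: "{j. j < N+n-1 \<and> Suc j \<notin> {2} \<or> N \<le> j} = {j. j \<noteq> 1}"
    using three_le_N n_pos by auto
  show ?thesis
    unfolding dodgson_def C_poly_def rows cols
    by (rule det_submatrix_not_0_not_1[OF graph_matrix_carrier]) (use three_le_N n_pos in simp)
qed

lemma map_mat_mp_eval_graph_matrix: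
  "map_mat (mp_eval a) (graph_matrix n N src tgt d K) = graph_matrix_at a K"
  by (rule eq_matI) (auto simp: graph_matrix_def graph_matrix_at_def)

lemma det_F_at: "det (F_at a) = mp_eval a (det F_poly)"
  by (simp add: F_poly_def F_at_def map_mat_replace_row_unit map_mat_mp_eval_graph_matrix
      flip: mp_eval.hom_det)

lemma det_replace_row_unit_F_at:
  "det (replace_row_unit (F_at a) i i) = mp_eval a (det (replace_row_unit F_poly i i))"
  by (simp add: F_poly_def F_at_def map_mat_replace_row_unit map_mat_mp_eval_graph_matrix
      flip: mp_eval.hom_det)

lemma det_C_at: "det (C_at a) = mp_eval a (det C_poly)"
  by (simp add: C_poly_def C_at_def map_mat_replace_row_unit map_mat_mp_eval_graph_matrix
      flip: mp_eval.hom_det)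

lemma F_poly_index:
  assumes "r < N+n-1" "c < N+n-1"
  shows "F_poly $$ (r,c) =
    (if r = 2 then (if c = 2 then 1 else 0) else if r = 0 then (if c = 1 then 1 else 0)
     else if r < N \<and> c < N then (if r = c then mp_var (Suc r) else 0)
     else if r < N then mp_const (of_int (eps src tgt (Suc r) (vcol d (c - N))))
     else if c < N then mp_const (of_int (- eps src tgt (Suc c) (vcol d (r - N))))
     else 0)"
  using assms three_le_N n_pos by (simp add: F_poly_def replace_row_unit_def graph_matrix_def)

lemma mp_pderiv_det_F_poly:
  assumes i: "i \<in> {3..<N}"
  shows "mp_pderiv (Suc i) (det (F_poly :: 'a::comm_ring_1 mpoly mat)) = det (replace_row_unit F_poly i i)"
proof (rule mp_pderiv_det_eq_det_replace_row_unit[OF F_poly_carrier])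
  show "i < N+n-1" using i n_pos by auto
  then show "F_poly $$ (i,i) = mp_var (Suc i)" using i by (simp add: F_poly_index)
  show "var_free (Suc i) (F_poly $$ (r,c))" if "r < N+n-1" "c < N+n-1" "(r,c) \<noteq> (i,i)" for r c
    using that i by (auto simp: F_poly_index var_free_0 var_free_1 var_free_const var_free_var)
qed

lemma det_F_poly_eq_0_of_vertex_kernel:
  fixes y :: "'k::field vec"
  assumes y: "y \<in> carrier_vec (N+n-1)" "y \<noteq> 0\<^sub>v (N+n-1)" "F_at a *\<^sub>v y = 0\<^sub>v (N+n-1)"
    and vertex: "\<And>j. j < N \<Longrightarrow> y $ j = 0"
  shows "det (F_poly :: 'k mpoly mat) = 0"
proof (rule det_eq_0_of_constant_kernel_vector[OF F_poly_carrier y(1,2)])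
  show "F_poly $$ (i,j) \<in> range mp_const" if "i < N+n-1" "j < N+n-1" "y $ j \<noteq> 0" for i j
  proof -
    have "N \<le> j" using vertex that(3) by (meson not_le)
    then show ?thesis
      using that three_le_N range_eqI[of 0 mp_const 0] range_eqI[of 1 mp_const 1]
      by (auto simp: F_poly_index)
  qed
  show "map_mat (mp_eval a) F_poly *\<^sub>v y = 0\<^sub>v (N+n-1)"
    using y(3) by (simp add: F_poly_def F_at_def map_mat_replace_row_unit map_mat_mp_eval_graph_matrix)
qed

lemma open_hypersurface_smooth_dodgson:
  "open_hypersurface_smooth {4..N}
     (dodgson n N src tgt d {1,3} {2,3} {} :: 'k::field mpoly) (dodgson n N src tgt d {1} {2} {3})"
proof -
  have "det (F_poly :: 'k mpoly mat) = 0"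
    if f: "mp_eval a (det F_poly) = 0" and g: "mp_eval a (det C_poly) \<noteq> 0"
      and df: "\<forall>e\<in>{4..N}. mp_eval a (mp_pderiv e (det F_poly)) = 0" for a :: "nat \<Rightarrow> 'k"
  proof -
    have "det (replace_row_unit (F_at a) i i) = 0" if "i \<in> {3..<N}" for i
      using df that by (simp add: det_replace_row_unit_F_at mp_pderiv_det_F_poly[symmetric])
    with f g obtain y where "y \<in> carrier_vec (N+n-1)" "y \<noteq> 0\<^sub>v (N+n-1)"
      "F_at a *\<^sub>v y = 0\<^sub>v (N+n-1)" "\<And>j. j < N \<Longrightarrow> y $ j = 0"
      by (metis F_at_vertex_kernel det_F_at det_C_at)
    then show ?thesis by (rule det_F_poly_eq_0_of_vertex_kernel)
  qed
  then show ?thesis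
    unfolding open_hypersurface_smooth_def dodgson_13_23_eq_det_F_poly dodgson_1_2_3_eq_det_C_poly
    by (auto simp: mp_pderiv_uminus mp_eval.hom_uminus)
qed

end

theorem corollary4p2:
  fixes n N :: nat and src tgt :: "nat \<Rightarrow> nat" and v d :: nat
  assumes "loopless_graph n N src tgt"
    and "v < n" and "d < n"
    and "{e \<in> {1..N}. src e = v \<or> tgt e = v} = {1, 2, 3}"
  shows "open_hypersurface_smooth {4..N}
           (dodgson n N src tgt d {1,3} {2,3} {} :: 'k::field mpoly)
           (dodgson n N src tgt d {1} {2} {3})"
proof -
  interpret graph_with_trivalent_vertex n N src tgt v d
    using assms by unfold_locales
  show ?thesis by (rule open_hypersurface_smooth_dodgson)
qed

end
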